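(* Let $p$ be a prime with $p\equiv 1\pmod 3$, and let $$D_p(1,1)=\det\left[(i^2+ij+j^2)^{p-2}\right]_{1\le i,j\le p-1}.$$ Then the Legendre symbol satisfies $$\left(\frac{D_p(1,1)}{p}\right)=\begin{cases}0 & \text{if } p\equiv 7\pmod 9,\\ 1 & \text{otherwise.}\end{cases}$$
   Context: $\left(\frac{\cdot}{p}\right)$ denotes the Legendre symbol modulo $p$. The determinant is of the $(p-1)\times(p-1)$ integer matrix whose $(i,j)$ entry is $(i^2+ij+j^2)^{p-2}$. *)

theory Defs
  imports "Jordan_Normal_Form.Determinant" "HOL-Number_Theory.Number_Theory"
begin

text \<open>D_p(1,1): determinant of the (p-1)x(p-1) integer matrix with (i,j) entry
  (i^2+ij+j^2)^(p-2), 1 <= i,j <= p-1. Jordan_Normal_Form matrices are 0-indexed,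
  so entry (i,j) uses i+1, j+1.\<close>
definition D_p11 :: "nat \<Rightarrow> int" where
  "D_p11 p = det (mat (p - 1) (p - 1)
     (\<lambda>(i, j). (int (i+1) ^ 2 + int (i+1) * int (j+1) + int (j+1) ^ 2) ^ (p - 2)))"

end

theory Submission
  imports Defs
begin

text \<open>
  Let V be the Vandermonde matrix (y^k) over the nonzero residues y and 0 \<le> k < p - 1. As
  x^2 + xy + y^2 is homogeneous, the substitution y = x t shows that the product of the matrix of
  D_p(1,1) with V agrees modulo p with diag(x^(2(p-2))) V diag(\<lambda>_k), where
  \<lambda>_k = \<Sum>_t (t^2 + t + 1)^(p-2) t^k. The determinant of V and (by Wilson) the row factors are
  units, hence D_p(1,1) \<equiv> \<Prod>_k \<lambda>_k.

  Modulo p, (t^2 + t + 1)^(p-2) = (1 - t)/(1 - t^3) and 1/(1 - z) = \<Sum>_(r<p-1) (r+1) z^r when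
  z^(p-1) = 1 \<noteq> z. Expanding \<lambda>_k accordingly and using \<Sum>_t t^e \<equiv> -[p - 1 divides e], each
  3 \<lambda>_k becomes an explicit integer depending only on k, and for p = 3m + 1 the product of these
  integers is congruent to 25 Q^2 with Q = \<Prod>_(1 \<le> s < m) (9s + 5). So D_p(1,1) is a square
  modulo p, and it vanishes exactly when p divides some 9s + 5, i.e. when p \<equiv> 7 (mod 9).
\<close>

lemma fermat_theorem_int:
  fixes x :: int
  assumes p: "prime p" and nd: "\<not> int p dvd x"
  shows "[x ^ (p - 1) = 1] (mod int p)"
proof -
  define a where "a = nat (x mod int p)"
  have ia: "int a = x mod int p"
    using p prime_gt_0_nat unfolding a_def by simp
  have "\<not> p dvd a"
  proof
    assume "p dvd a"
    then have "int p dvd x mod int p"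
      using ia by (metis int_dvd_int_iff)
    then show False
      using nd by (simp add: dvd_mod_iff)
  qed
  then have "[a ^ (p - 1) = 1] (mod p)"
    using fermat_theorem p by blast
  then have "[int a ^ (p - 1) = 1] (mod int p)"
    by (metis cong_int_iff of_nat_1 of_nat_power)
  moreover have "[x = int a] (mod int p)"
    using ia by (simp add: cong_def)
  ultimately show ?thesis
    by (meson cong_pow cong_trans)
qed

lemma cong_of_nat_mod: "[int (x mod n) = int x] (mod int n)"
  by (simp add: cong_def zmod_int)

lemma not_dvd_of_pos_less:
  fixes x n :: nat
  assumes "0 < x" "x < n"
  shows "\<not> int n dvd int x"
  using assms by (auto dest: dvd_imp_le)

lemma not_dvd_prime_int:
  fixes p q :: nat
  assumes "prime p" "prime q" "p \<noteq> q"
  shows "\<not> int p dvd int q"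
  using assms primes_dvd_imp_eq by (metis int_dvd_int_iff)

lemma bij_betw_mult_mod:
  fixes a n :: nat
  assumes "coprime a n"
  shows "bij_betw (\<lambda>y. a * y mod n) {1..<n} {1..<n}"
proof -
  have maps: "a * y mod n \<in> {1..<n}" if "y \<in> {1..<n}" for y
  proof -
    have "\<not> n dvd y"
      using that by (auto dest: dvd_imp_le)
    then have "\<not> n dvd a * y"
      using assms by (simp add: coprime_commute coprime_dvd_mult_right_iff)
    then show ?thesis
      using that by (auto simp: dvd_eq_mod_eq_0)
  qed
  have "inj_on (\<lambda>y. a * y mod n) {1..<n}"
  proof
    fix x y
    assume "x \<in> {1..<n}" "y \<in> {1..<n}" "a * x mod n = a * y mod n"
    then show "x = y"
      using cong_mult_lcancel_nat[OF assms, of x y] by (auto simp: cong_def)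
  qed
  moreover have "(\<lambda>y. a * y mod n) ` {1..<n} \<subseteq> {1..<n}"
    using maps by auto
  ultimately show ?thesis
    using endo_inj_surj[of "{1..<n}"] by (simp add: bij_betw_def)
qed

lemma sum_lessThan_pred_shift:
  fixes p :: nat
  assumes "0 < p"
  shows "(\<Sum>i<p - 1. f (i + 1)) = (\<Sum>y\<in>{1..<p}. f y)"
proof -
  obtain q where "p = Suc q"
    using assms by (cases p) auto
  then have "(\<Sum>y\<in>{1..<p}. f y) = (\<Sum>i = 0..<q. f (Suc i))"
    by (simp only: One_nat_def sum.shift_bounds_Suc_ivl)
  then show ?thesis
    using \<open>p = Suc q\<close> by (simp add: atLeast0LessThan)
qed

lemma sum_powers_cong:
  assumes p: "prime p"
  shows "[(\<Sum>y\<in>{1..<p}. int y ^ e) = (if (p - 1) dvd e then -1 else 0)] (mod int p)"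
proof (cases "(p - 1) dvd e")
  case True
  then obtain c where c: "e = (p - 1) * c" ..
  have "[(\<Sum>y\<in>{1..<p}. int y ^ e) = (\<Sum>y\<in>{1..<p}. 1)] (mod int p)"
  proof (rule cong_sum)
    fix y
    assume "y \<in> {1..<p}"
    then have "[int y ^ (p - 1) = 1] (mod int p)"
      using fermat_theorem_int[OF p] not_dvd_of_pos_less by simp
    then show "[int y ^ e = 1] (mod int p)"
      using cong_pow[of "int y ^ (p - 1)" 1 "int p" c] by (simp add: c power_mult)
  qed
  moreover have "[(\<Sum>y\<in>{1..<p}. 1) = (-1 :: int)] (mod int p)"
    using prime_gt_0_nat[OF p] by (simp add: cong_iff_dvd_diff)
  ultimately show ?thesis
    using True by (auto intro: cong_trans)
next
  case False
  \<comment> \<open>multiplying by a primitive root g permutes the summands and scales the sum by g^e \<noteq> 1\<close>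
  have p1: "p > 1"
    using p prime_gt_1_nat by blast
  obtain g where g: "residue_primroot p g"
    using prime_primitive_root_exists[OF p1 p] by blast
  then have "ord p g = p - 1" "coprime g p"
    using p by (simp_all add: residue_primroot_def totient_prime coprime_commute)
  then have ge: "\<not> [g ^ e = 1] (mod p)"
    using False ord_divides[of g e p] by simp
  define S where "S = (\<Sum>y\<in>{1..<p}. int y ^ e)"
  have "S = (\<Sum>y\<in>{1..<p}. int (g * y mod p) ^ e)"
    unfolding S_def
    using sum.reindex_bij_betw[OF bij_betw_mult_mod[OF \<open>coprime g p\<close>], of "\<lambda>z. int z ^ e"]
    by simp
  also have "[\<dots> = (\<Sum>y\<in>{1..<p}. int (g * y) ^ e)] (mod int p)"
    by (intro cong_sum cong_pow cong_of_nat_mod)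
  also have "(\<Sum>y\<in>{1..<p}. int (g * y) ^ e) = int g ^ e * S"
    unfolding S_def by (simp add: sum_distrib_left power_mult_distrib)
  finally have "int p dvd S * (int g ^ e - 1)"
    by (simp add: cong_iff_dvd_diff dvd_diff_commute algebra_simps)
  moreover have "\<not> int p dvd int g ^ e - 1"
    using ge by (metis cong_iff_dvd_diff cong_int_iff of_nat_1 of_nat_power)
  ultimately have "int p dvd S"
    using p by (simp add: prime_dvd_mult_iff)
  then show ?thesis
    using False by (simp add: S_def cong_0_iff)
qed

lemma index_mat_mult_mat:
  assumes "i < n" "j < n"
  shows "(mat n n f * mat n n g) $$ (i, j) = (\<Sum>k<n. f (i, k) * g (k, j))"
  using assms by (simp add: scalar_prod_def atLeast0LessThan)

lemma det_cong:
  fixes A B :: "'a :: unique_euclidean_ring mat"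
  assumes A: "A \<in> carrier_mat n n" and B: "B \<in> carrier_mat n n"
    and entries: "\<And>i j. i < n \<Longrightarrow> j < n \<Longrightarrow> [A $$ (i, j) = B $$ (i, j)] (mod m)"
  shows "[det A = det B] (mod m)"
  unfolding det_def'[OF A] det_def'[OF B]
proof (intro cong_sum cong_mult cong_refl cong_prod)
  fix \<sigma> i
  assume "\<sigma> \<in> {\<sigma>. \<sigma> permutes {0..<n}}" "i \<in> {0..<n}"
  then show "[A $$ (i, \<sigma> i) = B $$ (i, \<sigma> i)] (mod m)"
    using entries permutes_in_image[of \<sigma> "{0..<n}" i] by auto
qed

lemma det_mat_scaled:
  fixes W :: "'a :: comm_ring_1 mat"
  assumes W: "W \<in> carrier_mat n n"
  shows "det (mat n n (\<lambda>(i, k). a i * b k * W $$ (i, k)))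
    = (\<Prod>i<n. a i) * (\<Prod>k<n. b k) * det W"
proof -
  have row: "(\<Prod>i = 0..<n. mat n n (\<lambda>(i, k). a i * b k * W $$ (i, k)) $$ (i, \<sigma> i))
      = (\<Prod>i<n. a i) * (\<Prod>k<n. b k) * (\<Prod>i = 0..<n. W $$ (i, \<sigma> i))"
    if \<sigma>: "\<sigma> permutes {0..<n}" for \<sigma>
  proof -
    have "(\<Prod>i = 0..<n. mat n n (\<lambda>(i, k). a i * b k * W $$ (i, k)) $$ (i, \<sigma> i))
        = (\<Prod>i = 0..<n. a i * b (\<sigma> i) * W $$ (i, \<sigma> i))"
      using permutes_in_image[OF \<sigma>] by (intro prod.cong) auto
    also have "\<dots> = (\<Prod>i = 0..<n. a i) * (\<Prod>i = 0..<n. b (\<sigma> i)) * (\<Prod>i = 0..<n. W $$ (i, \<sigma> i))"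
      by (simp add: prod.distrib)
    also have "(\<Prod>i = 0..<n. b (\<sigma> i)) = (\<Prod>i = 0..<n. b i)"
      using prod.permute[OF \<sigma>, of b] by (simp add: comp_def)
    finally show ?thesis
      by (simp add: atLeast0LessThan)
  qed
  have "det (mat n n (\<lambda>(i, k). a i * b k * W $$ (i, k)))
      = (\<Sum>\<sigma> \<in> {\<sigma>. \<sigma> permutes {0..<n}}.
           signof \<sigma> * (\<Prod>i = 0..<n. mat n n (\<lambda>(i, k). a i * b k * W $$ (i, k)) $$ (i, \<sigma> i)))"
    by (rule det_def') simp
  also have "\<dots> = (\<Sum>\<sigma> \<in> {\<sigma>. \<sigma> permutes {0..<n}}.
           signof \<sigma> * ((\<Prod>i<n. a i) * (\<Prod>k<n. b k) * (\<Prod>i = 0..<n. W $$ (i, \<sigma> i))))"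
    by (intro sum.cong refl) (simp only: mem_Collect_eq row)
  also have "\<dots> = (\<Prod>i<n. a i) * (\<Prod>k<n. b k) * det W"
    unfolding det_def'[OF W] sum_distrib_left by (intro sum.cong) (auto simp: algebra_simps)
  finally show ?thesis .
qed

lemma dvd_pred_mult_add_iff:
  fixes n k l :: nat
  assumes "k < n" "l < n"
  shows "n dvd (n - 1) * k + l \<longleftrightarrow> k = l"
proof -
  obtain n' where "n = Suc n'"
    using assms by (cases n) auto
  then have "int ((n - 1) * k + l) = int n * int k + (int l - int k)"
    by (simp add: algebra_simps)
  then have "n dvd (n - 1) * k + l \<longleftrightarrow> int n dvd int l - int k"
    by (metis dvd_add_right_iff dvd_triv_left int_dvd_int_iff)
  also have "\<dots> \<longleftrightarrow> k = l"
    using assms dvd_imp_le_int[of "int l - int k" "int n"]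
    by (cases "k = l") (auto simp: abs_if split: if_split_asm)
  finally show ?thesis .
qed

definition unit_vandermonde :: "nat \<Rightarrow> int mat" where
  "unit_vandermonde p = mat (p - 1) (p - 1) (\<lambda>(i, k). int (i + 1) ^ k)"

lemma not_dvd_det_unit_vandermonde:
  assumes p: "prime p"
  shows "\<not> int p dvd det (unit_vandermonde p)"
proof
  assume dvd: "int p dvd det (unit_vandermonde p)"
  define n where "n = p - 1"
  define V where "V = unit_vandermonde p"
  \<comment> \<open>y^(p-2) inverts y, so V' inverts V modulo p up to sign\<close>
  define V' where "V' = mat n n (\<lambda>(k, i). int (i + 1) ^ ((p - 2) * k))"
  have carrier: "V \<in> carrier_mat n n" "V' \<in> carrier_mat n n"
    by (simp_all add: V_def V'_def unit_vandermonde_def n_def)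
  have "[det (V' * V) = det ((-1) \<cdot>\<^sub>m 1\<^sub>m n)] (mod int p)"
  proof (rule det_cong)
    fix k l
    assume kl: "k < n" "l < n"
    have "(V' * V) $$ (k, l) = (\<Sum>i<p - 1. int (i + 1) ^ ((p - 2) * k + l))"
      unfolding V_def V'_def unit_vandermonde_def n_def
      using kl by (subst index_mat_mult_mat) (simp_all add: n_def power_add)
    also have "\<dots> = (\<Sum>y\<in>{1..<p}. int y ^ ((p - 2) * k + l))"
      by (rule sum_lessThan_pred_shift[OF prime_gt_0_nat[OF p],
            where f = "\<lambda>y. int y ^ ((p - 2) * k + l)"])
    also have "[\<dots> = (if k = l then -1 else 0)] (mod int p)"
    proof -
      have "(p - 1) dvd (p - 2) * k + l \<longleftrightarrow> k = l"
        using dvd_pred_mult_add_iff[of k "p - 1" l] kl by (simp add: n_def numeral_2_eq_2)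
      then show ?thesis
        using sum_powers_cong[OF p, of "(p - 2) * k + l"] by simp
    qed
    finally show "[(V' * V) $$ (k, l) = ((-1) \<cdot>\<^sub>m 1\<^sub>m n) $$ (k, l)] (mod int p)"
      using kl by (cases "k = l") simp_all
  qed (use carrier in simp_all)
  moreover have "det (V' * V) = det V' * det V"
    using det_mult[OF carrier(2,1)] .
  moreover have "det ((-1) \<cdot>\<^sub>m 1\<^sub>m n) = (-1 :: int) ^ n"
    by simp
  ultimately have cong: "[det V' * det V = (-1) ^ n] (mod int p)"
    by simp
  have "int p dvd det V' * det V"
    using dvd by (simp add: V_def)
  then have "int p dvd (-1) ^ n"
    using cong_dvd_iff[OF cong] by blast
  moreover have "is_unit ((-1 :: int) ^ n)"
    by simp
  ultimately have "is_unit (int p)"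
    by (rule dvd_unit_imp_unit)
  then show False
    using not_prime_unit[of "int p"] p by simp
qed

definition D_p11_mat :: "nat \<Rightarrow> int mat" where
  "D_p11_mat p = mat (p - 1) (p - 1)
     (\<lambda>(i, j). (int (i+1) ^ 2 + int (i+1) * int (j+1) + int (j+1) ^ 2) ^ (p - 2))"

definition quadratic_moment :: "nat \<Rightarrow> nat \<Rightarrow> int" where
  "quadratic_moment p k = (\<Sum>y\<in>{1..<p}. (int y ^ 2 + int y + 1) ^ (p - 2) * int y ^ k)"

lemma D_p11_mat_mult_vandermonde_cong:
  assumes p: "prime p" and i: "i < p - 1" and k: "k < p - 1"
  shows "[(D_p11_mat p * unit_vandermonde p) $$ (i, k)
    = int (i + 1) ^ (2 * (p - 2)) * quadratic_moment p k * int (i + 1) ^ k] (mod int p)"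
proof -
  define a where "a = i + 1"
  define G where "G b = (int a ^ 2 + int a * int b + int b ^ 2) ^ (p - 2) * int b ^ k" for b
  have "\<not> p dvd a"
    using i unfolding a_def by (auto dest: dvd_imp_le)
  then have "coprime a p"
    using p prime_imp_coprime coprime_commute by blast
  have "(D_p11_mat p * unit_vandermonde p) $$ (i, k) = (\<Sum>j<p - 1. G (j + 1))"
    unfolding D_p11_mat_def unit_vandermonde_def G_def a_def
    using i k by (subst index_mat_mult_mat) auto
  also have "\<dots> = (\<Sum>b\<in>{1..<p}. G b)"
    by (rule sum_lessThan_pred_shift[OF prime_gt_0_nat[OF p]])
  also have "\<dots> = (\<Sum>y\<in>{1..<p}. G (a * y mod p))"
    using sum.reindex_bij_betw[OF bij_betw_mult_mod[OF \<open>coprime a p\<close>], of G] by simp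
  also have "[\<dots> = (\<Sum>y\<in>{1..<p}. G (a * y))] (mod int p)"
    unfolding G_def by (intro cong_sum cong_mult cong_pow cong_add cong_refl cong_of_nat_mod)
  also have "(\<Sum>y\<in>{1..<p}. G (a * y))
      = (\<Sum>y\<in>{1..<p}.
          int a ^ (2 * (p - 2)) * int a ^ k * ((int y ^ 2 + int y + 1) ^ (p - 2) * int y ^ k))"
  proof (rule sum.cong)
    fix y
    have "int a ^ 2 + int a * int (a * y) + int (a * y) ^ 2 = int a ^ 2 * (int y ^ 2 + int y + 1)"
      by (simp add: algebra_simps power2_eq_square)
    then show "G (a * y)
        = int a ^ (2 * (p - 2)) * int a ^ k * ((int y ^ 2 + int y + 1) ^ (p - 2) * int y ^ k)"
      unfolding G_def by (simp add: power_mult_distrib power_mult mult_ac)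
  qed simp
  also have "\<dots> = int (i + 1) ^ (2 * (p - 2)) * quadratic_moment p k * int (i + 1) ^ k"
    unfolding quadratic_moment_def a_def by (simp add: sum_distrib_left algebra_simps)
  finally show ?thesis .
qed

lemma D_p11_cong_prod_moments:
  assumes p: "prime p"
  shows "[D_p11 p = (\<Prod>k<p - 1. quadratic_moment p k)] (mod int p)"
proof -
  define n where "n = p - 1"
  define M where "M = D_p11_mat p"
  define V where "V = unit_vandermonde p"
  define a where "a i = int (i + 1) ^ (2 * (p - 2))" for i
  have carrier: "M \<in> carrier_mat n n" "V \<in> carrier_mat n n"
    by (simp_all add: M_def V_def D_p11_mat_def unit_vandermonde_def n_def)
  have "[det (M * V) = det (mat n n (\<lambda>(i, k). a i * quadratic_moment p k * V $$ (i, k)))] (mod int p)"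
  proof (rule det_cong)
    fix i k
    assume "i < n" "k < n"
    then show "[(M * V) $$ (i, k)
        = mat n n (\<lambda>(i, k). a i * quadratic_moment p k * V $$ (i, k)) $$ (i, k)] (mod int p)"
      using D_p11_mat_mult_vandermonde_cong[OF p, of i k]
      by (simp add: M_def V_def a_def n_def unit_vandermonde_def)
  qed (use carrier in auto)
  then have "[det M * det V = (\<Prod>i<n. a i) * (\<Prod>k<n. quadratic_moment p k) * det V] (mod int p)"
    using det_mult[OF carrier] det_mat_scaled[OF carrier(2)] by simp
  moreover have "[(\<Prod>i<n. a i) = 1] (mod int p)"
  proof -
    have "(\<Prod>i<n. a i) = fact n ^ (2 * (p - 2))"
      by (simp add: a_def fact_prod_Suc atLeast0LessThan prod_power_distrib)
    also have "[\<dots> = (-1) ^ (2 * (p - 2))] (mod int p)"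
      using cong_pow[OF wilson_theorem[OF p], of "2 * (p - 2)"] by (simp add: n_def)
    finally show ?thesis
      by (simp add: power_mult)
  qed
  ultimately have "[det M * det V = (\<Prod>k<n. quadratic_moment p k) * det V] (mod int p)"
    by (metis (no_types, lifting) cong_scalar_right cong_trans mult_1)
  moreover have "coprime (det V) (int p)"
    using not_dvd_det_unit_vandermonde[OF p] p
    by (simp add: V_def prime_imp_coprime coprime_commute)
  ultimately show ?thesis
    unfolding D_p11_def by (simp add: M_def D_p11_mat_def n_def cong_mult_rcancel)
qed

definition weighted_geometric_sum :: "nat \<Rightarrow> 'a :: comm_ring_1 \<Rightarrow> 'a" where
  "weighted_geometric_sum N z = (\<Sum>r<N. of_nat (r + 1) * z ^ r)"

lemma weighted_geometric_sum_closed_form: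
  "(1 - z) ^ 2 * weighted_geometric_sum N z = 1 - of_nat (N + 1) * z ^ N + of_nat N * z ^ (N + 1)"
  unfolding weighted_geometric_sum_def
  by (induct N) (simp_all add: algebra_simps power2_eq_square)

lemma weighted_geometric_sum_inverse_cong:
  fixes z :: int
  assumes p: "prime p" and z: "\<not> int p dvd z" and z1: "\<not> int p dvd 1 - z"
  shows "[(1 - z) * weighted_geometric_sum (p - 1) z = 1] (mod int p)"
proof -
  have fermat: "[z ^ (p - 1) = 1] (mod int p)"
    using fermat_theorem_int[OF p z] .
  have "p = Suc (p - 1)"
    using prime_gt_0_nat[OF p] by simp
  then have "(1 - z) * ((1 - z) * weighted_geometric_sum (p - 1) z)
      = 1 - int p * z ^ (p - 1) + int (p - 1) * (z * z ^ (p - 1))"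
    using weighted_geometric_sum_closed_form[of z "p - 1"]
    by (metis Suc_eq_plus1 mult.assoc power2_eq_square power_Suc)
  also have "[\<dots> = 1 - int p * 1 + int (p - 1) * (z * 1)] (mod int p)"
    by (intro cong_add cong_diff cong_mult cong_refl fermat)
  also have "[1 - int p * 1 + int (p - 1) * (z * 1) = (1 - z) * 1] (mod int p)"
    using prime_gt_0_nat[OF p]
    by (simp add: cong_iff_dvd_diff algebra_simps)
  finally have
    "[(1 - z) * ((1 - z) * weighted_geometric_sum (p - 1) z) = (1 - z) * 1] (mod int p)" .
  moreover have "coprime (1 - z) (int p)"
    using z1 p by (simp add: prime_imp_coprime coprime_commute)
  ultimately show ?thesis
    using cong_mult_lcancel by blast
qed

lemma weighted_geometric_sum_at_one_cong:
  fixes z :: int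
  assumes p: "prime p" "p \<noteq> 2" and z: "[z = 1] (mod int p)"
  shows "[weighted_geometric_sum (p - 1) z = 0] (mod int p)"
proof -
  have "[weighted_geometric_sum (p - 1) z = (\<Sum>r<p - 1. int (r + 1))] (mod int p)"
    unfolding weighted_geometric_sum_def
  proof (intro cong_sum)
    fix r
    have "[z ^ r = 1] (mod int p)"
      using cong_pow[OF z, of r] by simp
    then show "[of_nat (r + 1) * z ^ r = int (r + 1)] (mod int p)"
      by (metis cong_scalar_left mult_1_right)
  qed
  moreover have "int p dvd (\<Sum>r<p - 1. int (r + 1))"
  proof -
    have gauss: "2 * (\<Sum>r<N. int (r + 1)) = int N * (int N + 1)" for N
      by (induct N) (simp_all add: algebra_simps)
    have "\<not> int p dvd 2"
      using not_dvd_prime_int[OF p(1), of 2] p(2) by simp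
    moreover have "int p dvd 2 * (\<Sum>r<p - 1. int (r + 1))"
      using gauss[of "p - 1"] prime_gt_0_nat[OF p(1)] by simp
    ultimately show ?thesis
      using p(1) by (simp add: prime_dvd_mult_iff)
  qed
  ultimately show ?thesis
    by (simp add: cong_0_iff cong_dvd_iff)
qed

text \<open>Modulo p, the power q^(p-2) is the inverse of q = y^2+y+1 = (y^3-1)/(y-1), and
  the inverse of 1-y^3 is the weighted geometric sum at y^3.\<close>
lemma cyclotomic3_power_cong:
  assumes p: "prime p" and y: "1 < y" "y < p"
  shows "[(int y ^ 2 + int y + 1) ^ (p - 2)
    = (1 - int y) * weighted_geometric_sum (p - 1) (int y ^ 3)] (mod int p)"
proof -
  define q where "q = int y ^ 2 + int y + 1"
  define z where "z = int y ^ 3"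
  have factor: "1 - z = (1 - int y) * q"
    unfolding z_def q_def by (simp add: algebra_simps power2_eq_square power3_eq_cube)
  have "\<not> int p dvd 1 - int y"
    using y dvd_imp_le_int[of "1 - int y" "int p"] by auto
  show ?thesis
  proof (cases "int p dvd q")
    case True
    have "q dvd q ^ (p - 2)"
      using y by (intro dvd_power) auto
    with True have "[q ^ (p - 2) = 0] (mod int p)"
      by (simp add: cong_0_iff dvd_trans)
    moreover have "[weighted_geometric_sum (p - 1) z = 0] (mod int p)"
      using True factor y p by (intro weighted_geometric_sum_at_one_cong)
        (auto simp: cong_iff_dvd_diff dvd_diff_commute)
    then have "[(1 - int y) * weighted_geometric_sum (p - 1) z = 0] (mod int p)"
      using cong_scalar_left by fastforce
    ultimately show ?thesis
      unfolding q_def z_def by (metis cong_sym cong_trans)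
  next
    case False
    have "\<not> int p dvd 1 - z"
      using False \<open>\<not> int p dvd 1 - int y\<close> p factor by (simp add: prime_dvd_mult_iff)
    moreover have "\<not> int p dvd z"
      using p y not_dvd_of_pos_less[of y p] unfolding z_def by (simp add: prime_dvd_power_iff)
    ultimately have "[(1 - z) * weighted_geometric_sum (p - 1) z = 1] (mod int p)"
      using weighted_geometric_sum_inverse_cong[OF p] by blast
    moreover have "(1 - z) * weighted_geometric_sum (p - 1) z
        = q * ((1 - int y) * weighted_geometric_sum (p - 1) z)"
      unfolding factor by (simp add: ac_simps)
    ultimately have "[q * ((1 - int y) * weighted_geometric_sum (p - 1) z) = 1] (mod int p)"
      by metis
    moreover have "[q * q ^ (p - 2) = 1] (mod int p)"
      using fermat_theorem_int[OF p False] y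
      by (simp add: power_Suc[symmetric] Suc_diff_Suc numeral_2_eq_2)
    ultimately have
      "[q * q ^ (p - 2) = q * ((1 - int y) * weighted_geometric_sum (p - 1) z)] (mod int p)"
      by (metis cong_sym cong_trans)
    then show ?thesis
      using False p unfolding q_def z_def
      by (simp add: cong_mult_lcancel prime_imp_coprime coprime_commute)
  qed
qed

definition dvd_weight :: "nat \<Rightarrow> nat \<Rightarrow> int" where
  "dvd_weight p c = (\<Sum>r<p - 1. if (p - 1) dvd 3 * r + c then int (r + 1) else 0)"

lemma sum_moment_terms_expand:
  "(\<Sum>y\<in>A. (1 - int y) * weighted_geometric_sum n (int y ^ 3) * int y ^ k)
    = (\<Sum>r<n. int (r + 1) * ((\<Sum>y\<in>A. int y ^ (3 * r + k)) - (\<Sum>y\<in>A. int y ^ (3 * r + k + 1))))"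
proof -
  have summand_eq: "(1 - int y) * (of_nat (r + 1) * (int y ^ 3) ^ r) * int y ^ k
      = int (r + 1) * (int y ^ (3 * r + k) - int y ^ (3 * r + k + 1))" for y r
  proof -
    have "(int y ^ 3) ^ r = int y ^ (3 * r)"
      by (simp add: power_mult)
    then show ?thesis
      by (simp add: power_add algebra_simps)
  qed
  have "(\<Sum>y\<in>A. (1 - int y) * weighted_geometric_sum n (int y ^ 3) * int y ^ k)
      = (\<Sum>y\<in>A. \<Sum>r<n. int (r + 1) * (int y ^ (3 * r + k) - int y ^ (3 * r + k + 1)))"
    unfolding weighted_geometric_sum_def sum_distrib_left sum_distrib_right summand_eq ..
  also have "\<dots> = (\<Sum>r<n. \<Sum>y\<in>A. int (r + 1) * (int y ^ (3 * r + k) - int y ^ (3 * r + k + 1)))"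
    by (rule sum.swap)
  also have "\<dots>
      = (\<Sum>r<n. int (r + 1) * ((\<Sum>y\<in>A. int y ^ (3 * r + k)) - (\<Sum>y\<in>A. int y ^ (3 * r + k + 1))))"
    by (simp only: sum_distrib_left[symmetric] sum_subtractf)
  finally show ?thesis .
qed

lemma sum_moment_terms_cong:
  assumes p: "prime p"
  shows "[(\<Sum>y\<in>{1..<p}. (1 - int y) * weighted_geometric_sum (p - 1) (int y ^ 3) * int y ^ k)
    = dvd_weight p (k + 1) - dvd_weight p k] (mod int p)"
proof -
  define \<delta> where "\<delta> e = (if (p - 1) dvd e then -1 else (0::int))" for e
  have "[(\<Sum>y\<in>{1..<p}. (1 - int y) * weighted_geometric_sum (p - 1) (int y ^ 3) * int y ^ k)
      = (\<Sum>r<p - 1. int (r + 1) * (\<delta> (3 * r + k) - \<delta> (3 * r + k + 1)))] (mod int p)"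
    unfolding sum_moment_terms_expand \<delta>_def
    by (intro cong_sum cong_mult cong_diff cong_refl sum_powers_cong p)
  also have "(\<Sum>r<p - 1. int (r + 1) * (\<delta> (3 * r + k) - \<delta> (3 * r + k + 1)))
      = dvd_weight p (k + 1) - dvd_weight p k"
    unfolding dvd_weight_def sum_subtractf[symmetric]
    by (intro sum.cong refl) (simp add: \<delta>_def)
  finally show ?thesis .
qed

lemma three_moment_cong:
  assumes p: "prime p" and p3: "p \<noteq> 3"
  shows "[3 * quadratic_moment p k = 1 + 3 * (dvd_weight p (k + 1) - dvd_weight p k)] (mod int p)"
proof -
  define W where "W y = (1 - int y) * weighted_geometric_sum (p - 1) (int y ^ 3) * int y ^ k" for y
  have summand: "[3 * ((int y ^ 2 + int y + 1) ^ (p - 2) * int y ^ k)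
      = 3 * W y + (if y = 1 then 1 else 0)] (mod int p)" if "y \<in> {1..<p}" for y
  proof (cases "y = 1")
    case True
    have "\<not> int p dvd 3"
      using not_dvd_prime_int[OF p, of 3] p3 by simp
    moreover have "3 * 3 ^ (p - 2) = (3::int) ^ (p - 1)"
      using prime_ge_2_nat[OF p] by (simp add: power_Suc[symmetric] Suc_diff_Suc numeral_2_eq_2)
    ultimately have "[3 * 3 ^ (p - 2) = (1::int)] (mod int p)"
      using fermat_theorem_int[OF p] by simp
    then show ?thesis
      using True by (simp add: W_def)
  next
    case False
    with that have "[(int y ^ 2 + int y + 1) ^ (p - 2)
        = (1 - int y) * weighted_geometric_sum (p - 1) (int y ^ 3)] (mod int p)"
      by (intro cyclotomic3_power_cong p) auto
    then have "[3 * ((int y ^ 2 + int y + 1) ^ (p - 2) * int y ^ k)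
        = 3 * ((1 - int y) * weighted_geometric_sum (p - 1) (int y ^ 3) * int y ^ k)] (mod int p)"
      by (intro cong_mult cong_refl)
    then show ?thesis
      using False by (simp add: W_def)
  qed
  have "3 * quadratic_moment p k
      = (\<Sum>y\<in>{1..<p}. 3 * ((int y ^ 2 + int y + 1) ^ (p - 2) * int y ^ k))"
    by (simp add: quadratic_moment_def sum_distrib_left)
  also have "[\<dots> = (\<Sum>y\<in>{1..<p}. 3 * W y + (if y = 1 then 1 else 0))] (mod int p)"
    using summand by (rule cong_sum)
  also have "(\<Sum>y\<in>{1..<p}. 3 * W y + (if y = 1 then 1 else 0))
      = (\<Sum>y\<in>{1..<p}. 3 * W y) + (\<Sum>y\<in>{1..<p}. if y = 1 then 1 else 0)"
    by (rule sum.distrib)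
  also have "\<dots> = 1 + 3 * (\<Sum>y\<in>{1..<p}. W y)"
    using prime_ge_2_nat[OF p] by (simp add: sum_distrib_left)
  also have "[\<dots> = 1 + 3 * (dvd_weight p (k + 1) - dvd_weight p k)] (mod int p)"
    unfolding W_def by (intro cong_add cong_mult cong_refl sum_moment_terms_cong p)
  finally show ?thesis .
qed

lemma dvd_weight_eq_0:
  assumes "p = 3 * m + 1" and "\<not> 3 dvd c"
  shows "dvd_weight p c = 0"
proof -
  have "\<not> (p - 1) dvd 3 * r + c" for r
    using assms dvd_trans[of 3 "p - 1" "3 * r + c"] by (auto simp: dvd_add_right_iff)
  then show ?thesis
    by (simp add: dvd_weight_def)
qed

lemma dvd_iff_multiple_below_4:
  fixes x m :: nat
  assumes "x < 4 * m"
  shows "m dvd x \<longleftrightarrow> x = 0 \<or> x = m \<or> x = 2 * m \<or> x = 3 * m"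
proof
  assume "m dvd x"
  then obtain q where q: "x = m * q" ..
  with assms have "q < 4"
    by (metis mult.commute nat_mult_less_cancel_disj)
  then have "q = 0 \<or> q = 1 \<or> q = 2 \<or> q = 3"
    by auto
  with q show "x = 0 \<or> x = m \<or> x = 2 * m \<or> x = 3 * m"
    by auto
qed auto

lemma dvd_weight_mult_3:
  assumes n: "p = 3 * m + 1" and a: "a \<le> m" and m: "1 \<le> m"
  shows "dvd_weight p (3 * a) = 3 * int (if a = 0 then 0 else m - a) + 3 * int m + 3"
proof -
  have n': "p - 1 = 3 * m"
    using n by simp
  define r0 where "r0 = (if a = 0 then 0 else m - a)"
  have hits: "{r. r < 3 * m \<and> (p - 1) dvd 3 * r + 3 * a} = {r0, r0 + m, r0 + 2 * m}"
  proof -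
    have "(p - 1) dvd 3 * r + 3 * a \<longleftrightarrow> m dvd r + a" for r
      unfolding n' by (metis distrib_left nat_mult_dvd_cancel1 zero_less_numeral)
    moreover have "m dvd r + a \<longleftrightarrow> r + a = 0 \<or> r + a = m \<or> r + a = 2 * m \<or> r + a = 3 * m"
      if "r < 3 * m" for r
      using that a by (intro dvd_iff_multiple_below_4) simp
    ultimately show ?thesis
      unfolding r0_def using a m by auto
  qed
  have "dvd_weight p (3 * a) = (\<Sum>r\<in>{r. r < 3 * m \<and> (p - 1) dvd 3 * r + 3 * a}. int (r + 1))"
    unfolding dvd_weight_def n'
    by (simp add: sum.inter_filter[symmetric] lessThan_def Collect_conj_eq[symmetric])
  also have "\<dots> = int (r0 + 1) + int (r0 + m + 1) + int (r0 + 2 * m + 1)"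
    unfolding hits using m by simp
  finally show ?thesis
    unfolding r0_def by simp
qed

text \<open>A representative of 3 * quadratic_moment p k modulo p = 3 m + 1 that does not depend on p.\<close>
definition moment_residue :: "nat \<Rightarrow> int" where
  "moment_residue k =
    (if k mod 3 = 1 then 1
     else if k mod 3 = 2 then - (9 * int (k div 3) + 5)
     else if k = 0 then -5 else 9 * int (k div 3) - 2)"

lemma three_moment_cong_residue:
  assumes p: "prime p" and n: "p = 3 * m + 1" and k: "k < p - 1"
  shows "[3 * quadratic_moment p k = moment_residue k] (mod int p)"
proof -
  have m: "1 \<le> m"
    using n prime_ge_2_nat[OF p] by linarith
  have "p \<noteq> 3"
    using n by presburger
  then have moment:
    "[3 * quadratic_moment p k = 1 + 3 * (dvd_weight p (k + 1) - dvd_weight p k)] (mod int p)"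
    using three_moment_cong[OF p] by blast
  have ip: "int p = 3 * int m + 1"
    using n m by linarith
  define t where "t = k div 3"
  have kt: "k = 3 * t + k mod 3"
    unfolding t_def by simp
  have "[1 + 3 * (dvd_weight p (k + 1) - dvd_weight p k) = moment_residue k] (mod int p)"
  proof -
    consider "k mod 3 = 1" | "k mod 3 = 2" | "k mod 3 = 0"
      by linarith
    then show ?thesis
    proof cases
      case 1
      then have "dvd_weight p (k + 1) = 0" "dvd_weight p k = 0"
        by (intro dvd_weight_eq_0[OF n]; presburger)+
      then show ?thesis
        using 1 by (simp add: moment_residue_def)
    next
      case 2
      then have k1: "k + 1 = 3 * (t + 1)" and "t + 1 \<le> m"
        using k kt n by simp_all
      then have "dvd_weight p (3 * (t + 1)) = 6 * int m - 3 * int t"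
        using dvd_weight_mult_3[OF n _ m, of "t + 1"] by simp
      then have "dvd_weight p (k + 1) = 6 * int m - 3 * int t"
        by (simp only: k1)
      moreover have "dvd_weight p k = 0"
        using 2 by (intro dvd_weight_eq_0[OF n]) presburger
      ultimately have "1 + 3 * (dvd_weight p (k + 1) - dvd_weight p k) - moment_residue k = 6 * int p"
        using 2 ip by (simp add: moment_residue_def t_def)
      then show ?thesis
        by (simp add: cong_iff_dvd_diff)
    next
      case 3
      then have "k = 3 * t" "t \<le> m"
        using k kt n by simp_all
      then have "dvd_weight p k = 3 * int (if t = 0 then 0 else m - t) + 3 * int m + 3"
        using dvd_weight_mult_3[OF n _ m] by simp
      moreover have "dvd_weight p (k + 1) = 0"
        using 3 by (intro dvd_weight_eq_0[OF n]) presburger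
      moreover have "moment_residue k = (if t = 0 then -5 else 9 * int t - 2)"
        using \<open>k = 3 * t\<close> by (simp add: moment_residue_def)
      ultimately have "1 + 3 * (dvd_weight p (k + 1) - dvd_weight p k) - moment_residue k
          = (if t = 0 then -3 else -6) * int p"
        using \<open>t \<le> m\<close> ip by simp
      then show ?thesis
        by (simp add: cong_iff_dvd_diff)
    qed
  qed
  with moment show ?thesis
    by (rule cong_trans)
qed

lemma prod_lessThan_triple:
  fixes m :: nat
  shows "(\<Prod>k<3 * m. f k) = (\<Prod>t<m. f (3 * t) * f (3 * t + 1) * f (3 * t + 2))"
proof (induct m)
  case (Suc m)
  have "3 * Suc m = Suc (Suc (Suc (3 * m)))"
    by simp
  then show ?case
    unfolding \<open>3 * Suc m = _\<close> using Suc by (simp add: mult_ac)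
qed simp

text \<open>The factors 9 t - 2 (at k = 3 t) and -(9 s + 5) (at k = 3 s + 2) agree modulo p when
  t = m - s, so the product is a square.\<close>
lemma prod_moment_residue_cong:
  assumes n: "p = 3 * m + 1" and m: "1 \<le> m"
  shows "[(\<Prod>k<3 * m. moment_residue k) = 25 * (\<Prod>s\<in>{1..<m}. 9 * int s + 5) ^ 2] (mod int p)"
proof -
  have ip: "int p = 3 * int m + 1"
    using n by simp
  define Q where "Q = (\<Prod>s\<in>{1..<m}. 9 * int s + 5)"
  have split0: "{..<m} = insert 0 {1..<m}"
    using m by auto
  have "(\<Prod>k<3 * m. moment_residue k)
      = (\<Prod>t<m. moment_residue (3 * t) * moment_residue (3 * t + 1) * moment_residue (3 * t + 2))"
    by (rule prod_lessThan_triple)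
  also have "\<dots> = (\<Prod>t<m. moment_residue (3 * t) * (- (9 * int t + 5)))"
  proof (intro prod.cong refl)
    fix t :: nat
    have "(3 * t + 1) mod 3 = 1" "(3 * t + 2) mod 3 = 2" "(3 * t + 2) div 3 = t"
      by presburger+
    then have "moment_residue (3 * t + 1) = 1" "moment_residue (3 * t + 2) = - (9 * int t + 5)"
      unfolding moment_residue_def by simp_all
    then show "moment_residue (3 * t) * moment_residue (3 * t + 1) * moment_residue (3 * t + 2)
        = moment_residue (3 * t) * (- (9 * int t + 5))"
      by simp
  qed
  also have "\<dots> = (\<Prod>t<m. moment_residue (3 * t)) * (\<Prod>t<m. - (9 * int t + 5))"
    by (rule prod.distrib)
  also have "\<dots> = 25 * ((\<Prod>t\<in>{1..<m}. 9 * int t - 2) * (\<Prod>s\<in>{1..<m}. - (9 * int s + 5)))"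
    unfolding split0 by (simp add: moment_residue_def)
  finally have product: "(\<Prod>k<3 * m. moment_residue k)
      = 25 * ((\<Prod>t\<in>{1..<m}. 9 * int t - 2) * (\<Prod>s\<in>{1..<m}. - (9 * int s + 5)))" .
  have "(\<Prod>t\<in>{1..<m}. 9 * int t - 2) = (\<Prod>s\<in>{1..<m}. 9 * int (m - s) - 2)"
    by (rule prod.reindex_bij_witness[where i = "\<lambda>s. m - s" and j = "\<lambda>s. m - s"]) auto
  also have "[\<dots> = (\<Prod>s\<in>{1..<m}. - (9 * int s + 5))] (mod int p)"
  proof (rule cong_prod)
    fix s
    assume "s \<in> {1..<m}"
    then have "9 * int (m - s) - 2 - (- (9 * int s + 5)) = 3 * int p"
      using ip by simp
    then show "[9 * int (m - s) - 2 = - (9 * int s + 5)] (mod int p)"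
      by (simp add: cong_iff_dvd_diff)
  qed
  finally have "[25 * ((\<Prod>t\<in>{1..<m}. 9 * int t - 2) * (\<Prod>s\<in>{1..<m}. - (9 * int s + 5)))
      = 25 * ((\<Prod>s\<in>{1..<m}. - (9 * int s + 5)) * (\<Prod>s\<in>{1..<m}. - (9 * int s + 5)))] (mod int p)"
    by (intro cong_mult cong_refl)
  moreover have "(\<Prod>s\<in>{1..<m}. - (9 * int s + 5)) * (\<Prod>s\<in>{1..<m}. - (9 * int s + 5)) = Q ^ 2"
    unfolding Q_def power2_eq_square prod.distrib[symmetric] by (simp only: minus_mult_minus)
  ultimately show ?thesis
    using product by (simp add: Q_def)
qed

lemma dvd_prod_9s_plus_5_iff:
  assumes p: "prime p" and n: "p = 3 * m + 1"
  shows "int p dvd (\<Prod>s\<in>{1..<m}. 9 * int s + 5) \<longleftrightarrow> p mod 9 = 7"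
proof -
  have "int p dvd 9 * int s + 5 \<longleftrightarrow> 9 * s + 5 = 2 * p" if "s < m" for s
  proof -
    have "int p dvd 9 * int s + 5 \<longleftrightarrow> p dvd 9 * s + 5"
      by (metis int_dvd_int_iff of_nat_add of_nat_mult of_nat_numeral)
    also have "\<dots> \<longleftrightarrow> 9 * s + 5 = 0 \<or> 9 * s + 5 = p \<or> 9 * s + 5 = 2 * p \<or> 9 * s + 5 = 3 * p"
      using that n by (intro dvd_iff_multiple_below_4) simp
    also have "\<dots> \<longleftrightarrow> 9 * s + 5 = 2 * p"
    proof -
      have "9 * s + 5 \<noteq> 3 * m + 1"
        by presburger
      moreover have "9 * s + 5 < 3 * p"
        using that n by linarith
      ultimately show ?thesis
        using n by auto
    qed
    finally show ?thesis .
  qed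
  then have "int p dvd (\<Prod>s\<in>{1..<m}. 9 * int s + 5) \<longleftrightarrow> (\<exists>s\<in>{1..<m}. 9 * s + 5 = 2 * p)"
    using p by (simp add: prime_dvd_prod_iff)
  also have "\<dots> \<longleftrightarrow> p mod 9 = 7"
  proof
    assume "\<exists>s\<in>{1..<m}. 9 * s + 5 = 2 * p"
    then obtain s where "9 * s + 5 = 2 * p"
      by blast
    then show "p mod 9 = 7"
      by presburger
  next
    assume "p mod 9 = 7"
    define q where "q = p div 9"
    have p9: "p = 9 * q + 7"
      using \<open>p mod 9 = 7\<close> div_mult_mod_eq[of p 9] unfolding q_def by linarith
    then have "2 * q + 1 < m"
      using n by linarith
    moreover have "9 * (2 * q + 1) + 5 = 2 * p"
      using p9 by simp
    ultimately show "\<exists>s\<in>{1..<m}. 9 * s + 5 = 2 * p"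
      by (intro bexI[where x = "2 * q + 1"]) simp_all
  qed
  finally show ?thesis .
qed

lemma Legendre_cong_square:
  assumes p: "prime p" and a: "[a = x ^ 2] (mod int p)"
  shows "Legendre a (int p) = (if int p dvd x then 0 else 1)"
proof (cases "int p dvd x")
  case True
  then have "[x ^ 2 = 0] (mod int p)"
    by (simp add: cong_0_iff power2_eq_square)
  with a have "[a = 0] (mod int p)"
    by (rule cong_trans)
  with True show ?thesis
    by (simp add: Legendre_def)
next
  case False
  then have "\<not> int p dvd x ^ 2"
    using p by (simp add: prime_dvd_power_iff)
  with a have "\<not> [a = 0] (mod int p)"
    by (metis cong_0_iff cong_dvd_iff)
  moreover have "QuadRes (int p) a"
    unfolding QuadRes_def using a cong_sym by blast
  ultimately show ?thesis
    using False by (simp add: Legendre_def)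
qed

lemma D_p11_cong_square:
  assumes p: "prime p" and n: "p = 3 * m + 1"
  shows "[D_p11 p = (5 * (\<Prod>s\<in>{1..<m}. 9 * int s + 5)) ^ 2] (mod int p)"
proof -
  have m: "1 \<le> m"
    using n prime_ge_2_nat[OF p] by linarith
  have "[3 ^ (p - 1) * D_p11 p = 3 ^ (p - 1) * (\<Prod>k<p - 1. quadratic_moment p k)] (mod int p)"
    using D_p11_cong_prod_moments[OF p] by (rule cong_scalar_left)
  also have "3 ^ (p - 1) * (\<Prod>k<p - 1. quadratic_moment p k)
      = (\<Prod>k<3 * m. 3 * quadratic_moment p k)"
    using n by (simp add: prod.distrib)
  also have "[\<dots> = (\<Prod>k<3 * m. moment_residue k)] (mod int p)"
    using three_moment_cong_residue[OF p n] n by (intro cong_prod) auto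
  also have "[(\<Prod>k<3 * m. moment_residue k) = 25 * (\<Prod>s\<in>{1..<m}. 9 * int s + 5) ^ 2] (mod int p)"
    by (rule prod_moment_residue_cong[OF n m])
  finally have "[3 ^ (p - 1) * D_p11 p = (5 * (\<Prod>s\<in>{1..<m}. 9 * int s + 5)) ^ 2] (mod int p)"
    by (simp add: power_mult_distrib)
  moreover have "[3 ^ (p - 1) = (1::int)] (mod int p)"
    using fermat_theorem_int[OF p] not_dvd_of_pos_less[of 3 p] n m by simp
  ultimately show ?thesis
    by (metis cong_scalar_right cong_sym cong_trans mult_1)
qed

theorem theorem1p1:
  fixes p :: nat
  assumes "prime p" and "p mod 3 = 1"
  shows "Legendre (D_p11 p) (int p) = (if p mod 9 = 7 then 0 else 1)"
proof -
  note p = assms(1)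
  define m where "m = p div 3"
  have n: "p = 3 * m + 1"
    using assms(2) div_mult_mod_eq[of p 3] unfolding m_def by linarith
  have "p \<noteq> 5"
    using n by presburger
  then have "\<not> int p dvd 5"
    using not_dvd_prime_int[OF p, of 5] by simp
  then have "int p dvd 5 * (\<Prod>s\<in>{1..<m}. 9 * int s + 5) \<longleftrightarrow> p mod 9 = 7"
    using dvd_prod_9s_plus_5_iff[OF p n] p by (simp add: prime_dvd_mult_iff)
  then show ?thesis
    using Legendre_cong_square[OF p D_p11_cong_square[OF p n]] by simp
qed

end
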